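(* Let $P$ be a finite set of constrained Horn clauses over a background theory admitting Craig interpolation, let $t \in \mathcal{L}(\mathcal{A}_P)$ be an infeasible trace-term, and let $TI(t)$ be a tree interpolant of $t$. Then every tree accepted by the interpolant tree automaton $\mathcal{A}^I_t$ is an infeasible trace-term of $P$; that is, $\mathcal{L}(\mathcal{A}^I_t)$ contains only infeasible trace-terms of $P$.
   Context: A constrained Horn clause (CHC) is a formula $p(X) \leftarrow \phi, p_1(X_1),\ldots,p_k(X_k)$ ($k\ge 0$), where $p,p_i$ are predicate symbols, $X, X_i$ are tuples of distinct variables and $\phi$ is a constraint of the background theory; $p(X)$ is the head. There is a distinguished predicate $\mathit{false}$ (interpreted as false). Each clause $cl$ of $P$ has an identifier $\mathsf{id}_P(cl)$, a function symbol of arity $k$ (the number of body atoms). The trace FTA $\mathcal{A}_P$ is the finite tree automaton whose states are the predicate symbols of $P$ together with $\mathit{false}$, whose only final state is $\mathit{false}$, and with one transition $c(p_1,\ldots,p_k)\to p$ for each clause $p(X)\leftarrow\phi,p_1(X_1),\ldots,p_k(X_k)$ of $P$ with identifier $c$. Elements of $\mathcal{L}(\mathcal{A}_P)$ are trace-terms (rooted at $\mathit{false}$). The AND-tree $T(t)$ of a trace-term $t$: each subterm $c(t_1,\ldots,t_k)$ of $t$ corresponds to a node labelled by an atom $p(X)$, the identifier $c$ of a clause $p(X)\leftarrow\phi,p_1(X_1),\ldots,p_k(X_k)$ and the constraint $\phi$, whose children are the nodes for $t_1,\ldots,t_k$, labelled by atoms $p_1(X_1),\ldots,p_k(X_k)$;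 variables are renamed so that local variables of the clause used at a node do not occur outside the subtree rooted at that node. Nodes are numbered uniquely. $F(T)$ is the conjunction of the constraint labels of all nodes of $T$; $T$ (and $t$) is feasible iff $F(T)$ is satisfiable, infeasible otherwise. For a node $i$, $T_i$ is the subtree rooted at $i$, $\phi_i$ is its constraint label, and $G(T_i)$ is the conjunction of the constraint labels of all nodes of $T$ not in $T_i$ ($\mathit{true}$ if none). A (Craig) interpolant $I(\psi_1,\psi_2)$ of formulas with $\psi_1\wedge\psi_2$ unsatisfiable is a formula $I$ with $\psi_1\to I$, $I\wedge\psi_2$ unsatisfiable, and $\mathrm{vars}(I)\subseteq\mathrm{vars}(\psi_1)\cap\mathrm{vars}(\psi_2)$. Tree interpolant $TI(t)$ of an infeasible trace-term $t$ with AND-tree $T$: a tree with the same nodes and atom labels as $T$, where each node $i$ carries a formula $I_i$: the root gets $\mathit{false}$; a leaf $i$ gets $I(F(T_i),G(T_i))$; any other node $i$ with children having formulas $I_{k_1},\ldots,I_{k_n}$ gets $I(\phi_i\wedge\bigwedge_{m} I_{k_m},\,G(T_i))$. The interpolant mapping is $\Pi_{TI}(A^j)=I_j$, where $A$ is the atom label of node $j$; writing the atom at node $j$ as $p(Y_j)$, $I_j$ is viewed as a formula over $Y_j$, and $\Pi_{TI}(p^j)(X)$ denotes it with $Y_j$ replaced by $X$. Interpolant tree automaton $\mathcal{A}^I_t$: states are the symbols $p^j$ for each node $j$ of $TI(t)$ with atom predicate $p$; the final state is $\mathit{false}^r$ for the root $r$; the alphabet is the set of clause identifiers of $P$; transitions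 are all $c(p_1^{j_1},\ldots,p_k^{j_k})\to p^j$ such that there is a clause $cl = p(X)\leftarrow\phi,p_1(X_1),\ldots,p_k(X_k)$ in $P$ with $c=\mathsf{id}_P(cl)$, nodes $j,j_1,\ldots,j_k$ of $TI(t)$ whose atom predicates are $p,p_1,\ldots,p_k$ respectively, and the implication $\phi\wedge\bigwedge_{m=1}^k\Pi_{TI}(p_m^{j_m})(X_m)\rightarrow\Pi_{TI}(p^j)(X)$ is valid. *)

theory Defs
  imports Main
begin

text \<open>A formula is given by its semantics (a predicate on valuations) together with
its (syntactic) set of free variables.\<close>
record ('x, 'd) formula =
  fsem :: "('x \<Rightarrow> 'd) \<Rightarrow> bool"
  fvars :: "'x set"

definition wf_formula :: "('x, 'd) formula \<Rightarrow> bool" where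
  "wf_formula f \<longleftrightarrow> finite (fvars f) \<and>
     (\<forall>\<sigma> \<sigma>'. (\<forall>x\<in>fvars f. \<sigma> x = \<sigma>' x) \<longrightarrow> fsem f \<sigma> = fsem f \<sigma>')"

definition satisfiable :: "('x, 'd) formula \<Rightarrow> bool" where
  "satisfiable f \<longleftrightarrow> (\<exists>\<sigma>. fsem f \<sigma>)"

definition ffalse :: "('x, 'd) formula" where
  "ffalse = \<lparr>fsem = (\<lambda>_. False), fvars = {}\<rparr>"

definition conj :: "('x, 'd) formula set \<Rightarrow> ('x, 'd) formula" where
  "conj S = \<lparr>fsem = (\<lambda>\<sigma>. \<forall>f\<in>S. fsem f \<sigma>), fvars = \<Union> (fvars ` S)\<rparr>"

definition conj2 :: "('x, 'd) formula \<Rightarrow> ('x, 'd) formula \<Rightarrow> ('x, 'd) formula" where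
  "conj2 a b = conj {a, b}"

definition rename :: "('v, 'd) formula \<Rightarrow> ('v \<Rightarrow> 'x) \<Rightarrow> ('x, 'd) formula" where
  "rename f \<rho> = \<lparr>fsem = (\<lambda>\<sigma>. fsem f (\<sigma> \<circ> \<rho>)), fvars = \<rho> ` fvars f\<rparr>"

definition is_interpolant ::
  "('x, 'd) formula \<Rightarrow> ('x, 'd) formula \<Rightarrow> ('x, 'd) formula \<Rightarrow> bool" where
  "is_interpolant \<psi>1 \<psi>2 I \<longleftrightarrow> wf_formula I \<and>
     (\<forall>\<sigma>. fsem \<psi>1 \<sigma> \<longrightarrow> fsem I \<sigma>) \<and>
     \<not> satisfiable (conj2 I \<psi>2) \<and>
     fvars I \<subseteq> fvars \<psi>1 \<inter> fvars \<psi>2"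

definition admits_interpolation :: "'x itself \<Rightarrow> 'd itself \<Rightarrow> bool" where
  "admits_interpolation _ _ \<longleftrightarrow>
     (\<forall>\<psi>1 \<psi>2 :: ('x, 'd) formula. wf_formula \<psi>1 \<and> wf_formula \<psi>2 \<and>
        \<not> satisfiable (conj2 \<psi>1 \<psi>2) \<longrightarrow> (\<exists>I. is_interpolant \<psi>1 \<psi>2 I))"

text \<open>A clause  p(X) <- phi, p1(X1), ..., pk(Xk).\<close>
record ('p, 'v, 'd) clause =
  head :: 'p
  hargs :: "'v list"
  constr :: "('v, 'd) formula"
  body :: "('p \<times> 'v list) list"

text \<open>A CHC program: a finite map from clause identifiers to clauses (identifiers are
unique). The distinguished predicate false is the parameter \<open>fls\<close>.\<close>
type_synonym ('c, 'p, 'v, 'd) program = "'c \<rightharpoonup> ('p, 'v, 'd) clause"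

definition wf_program :: "'p \<Rightarrow> ('c, 'p, 'v, 'd) program \<Rightarrow> bool" where
  "wf_program fls P \<longleftrightarrow> finite (dom P) \<and>
     (\<exists>ar :: 'p \<Rightarrow> nat. ar fls = 0 \<and>
        (\<forall>cl\<in>ran P. length (hargs cl) = ar (head cl) \<and>
                    (\<forall>(q, X)\<in>set (body cl). length X = ar q))) \<and>
     (\<forall>cl\<in>ran P. distinct (hargs cl) \<and> (\<forall>(q, X)\<in>set (body cl). distinct X) \<and>
                 wf_formula (constr cl))"

datatype 'c trm = TNode 'c "'c trm list"

inductive reach :: "('c \<times> 's list \<times> 's) set \<Rightarrow> 'c trm \<Rightarrow> 's \<Rightarrow> bool"
  for \<delta> where
  "(c, qs, q) \<in> \<delta> \<Longrightarrow> list_all2 (reach \<delta>) ts qs \<Longrightarrow> reach \<delta> (TNode c ts) q"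

definition lang :: "('c \<times> 's list \<times> 's) set \<Rightarrow> 's set \<Rightarrow> 'c trm set" where
  "lang \<delta> F = {t. \<exists>q\<in>F. reach \<delta> t q}"

text \<open>Trace FTA A_P: states are predicates, final state false.\<close>
definition trace_trans :: "('c, 'p, 'v, 'd) program \<Rightarrow> ('c \<times> 'p list \<times> 'p) set" where
  "trace_trans P = {(c, map fst (body cl), head cl) | c cl. P c = Some cl}"

definition trace_terms :: "'p \<Rightarrow> ('c, 'p, 'v, 'd) program \<Rightarrow> 'c trm set" where
  "trace_terms fls P = lang (trace_trans P) {fls}"

text \<open>Nodes are positions (paths of child indices) in the trace-term.\<close>
type_synonym pos = "nat list"

fun sub :: "'c trm \<Rightarrow> pos \<Rightarrow> 'c trm option" where
  "sub t [] = Some t"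
| "sub (TNode c ts) (i # w) = (if i < length ts then sub (ts ! i) w else None)"

definition nodes :: "'c trm \<Rightarrow> pos set" where
  "nodes t = {w. sub t w \<noteq> None}"

fun lbl :: "'c trm \<Rightarrow> 'c" where "lbl (TNode c ts) = c"
fun kids :: "'c trm \<Rightarrow> 'c trm list" where "kids (TNode c ts) = ts"

definition clause_at :: "('c, 'p, 'v, 'd) program \<Rightarrow> 'c trm \<Rightarrow> pos \<Rightarrow> ('p, 'v, 'd) clause" where
  "clause_at P t w = the (P (lbl (the (sub t w))))"

text \<open>Renaming used at node w, given the argument variables Y of its atom label:
head variables of the clause are mapped to Y, local variables x to the fresh (w, x).\<close>
definition ren :: "('c, 'p, 'v, 'd) program \<Rightarrow> 'c trm \<Rightarrow> pos \<Rightarrow> (pos \<times> 'v) list \<Rightarrow> 'v \<Rightarrow> pos \<times> 'v" where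
  "ren P t w Y x = (case map_of (zip (hargs (clause_at P t w)) Y) x of Some y \<Rightarrow> y | None \<Rightarrow> (w, x))"

text \<open>Argument variables of the atom labelling node (w @ u), starting from node w with
atom arguments Y.\<close>
primrec av :: "('c, 'p, 'v, 'd) program \<Rightarrow> 'c trm \<Rightarrow> pos \<Rightarrow> (pos \<times> 'v) list \<Rightarrow> pos \<Rightarrow> (pos \<times> 'v) list" where
  "av P t w Y [] = Y"
| "av P t w Y (i # u) = av P t (w @ [i]) (map (ren P t w Y) (snd (body (clause_at P t w) ! i))) u"

text \<open>Atom label p(Y_w) of node w: the root is labelled false (no arguments).\<close>
definition atom_args :: "('c, 'p, 'v, 'd) program \<Rightarrow> 'c trm \<Rightarrow> pos \<Rightarrow> (pos \<times> 'v) list" where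
  "atom_args P t w = av P t [] [] w"

definition atom_pred :: "('c, 'p, 'v, 'd) program \<Rightarrow> 'c trm \<Rightarrow> pos \<Rightarrow> 'p" where
  "atom_pred P t w = head (clause_at P t w)"

definition node_constr :: "('c, 'p, 'v, 'd) program \<Rightarrow> 'c trm \<Rightarrow> pos \<Rightarrow> (pos \<times> 'v, 'd) formula" where
  "node_constr P t w = rename (constr (clause_at P t w)) (ren P t w (atom_args P t w))"

definition F_sub :: "('c, 'p, 'v, 'd) program \<Rightarrow> 'c trm \<Rightarrow> pos \<Rightarrow> (pos \<times> 'v, 'd) formula" where
  "F_sub P t w = conj {node_constr P t u | u. u \<in> nodes t \<and> (\<exists>v. u = w @ v)}"

definition G_sub :: "('c, 'p, 'v, 'd) program \<Rightarrow> 'c trm \<Rightarrow> pos \<Rightarrow> (pos \<times> 'v, 'd) formula" where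
  "G_sub P t w = conj {node_constr P t u | u. u \<in> nodes t \<and> \<not> (\<exists>v. u = w @ v)}"

definition feasible :: "('c, 'p, 'v, 'd) program \<Rightarrow> 'c trm \<Rightarrow> bool" where
  "feasible P t \<longleftrightarrow> satisfiable (F_sub P t [])"

definition tree_interpolant ::
  "('c, 'p, 'v, 'd) program \<Rightarrow> 'c trm \<Rightarrow> (pos \<Rightarrow> (pos \<times> 'v, 'd) formula) \<Rightarrow> bool" where
  "tree_interpolant P t I \<longleftrightarrow>
     I [] = ffalse \<and>
     (\<forall>w\<in>nodes t. w \<noteq> [] \<longrightarrow>
        (if kids (the (sub t w)) = [] then is_interpolant (F_sub P t w) (G_sub P t w) (I w)
         else is_interpolant
                (conj ({node_constr P t w} \<union> {I (w @ [m]) | m. m < length (kids (the (sub t w)))}))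
                (G_sub P t w) (I w)))"

text \<open>Pi_TI(p^j)(X): the interpolant of node j with the atom arguments Y_j replaced by X.\<close>
definition Pi :: "('c, 'p, 'v, 'd) program \<Rightarrow> 'c trm \<Rightarrow> (pos \<Rightarrow> (pos \<times> 'v, 'd) formula) \<Rightarrow>
    pos \<Rightarrow> 'v list \<Rightarrow> ('v \<Rightarrow> 'd) \<Rightarrow> bool" where
  "Pi P t I j X \<sigma> = fsem (I j)
     (\<lambda>y. case map_of (zip (atom_args P t j) (map \<sigma> X)) y of Some d \<Rightarrow> d | None \<Rightarrow> undefined)"

definition interp_trans :: "('c, 'p, 'v, 'd) program \<Rightarrow> 'c trm \<Rightarrow> (pos \<Rightarrow> (pos \<times> 'v, 'd) formula) \<Rightarrow>
    ('c \<times> ('p \<times> pos) list \<times> ('p \<times> pos)) set" where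
  "interp_trans P t I = {(c, zip (map fst (body cl)) js, (head cl, j)) | c cl j js.
      P c = Some cl \<and> length js = length (body cl) \<and>
      j \<in> nodes t \<and> atom_pred P t j = head cl \<and>
      (\<forall>m < length js. js ! m \<in> nodes t \<and> atom_pred P t (js ! m) = fst (body cl ! m)) \<and>
      (\<forall>\<sigma>. fsem (constr cl) \<sigma> \<and> (\<forall>m < length js. Pi P t I (js ! m) (snd (body cl ! m)) \<sigma>)
            \<longrightarrow> Pi P t I j (hargs cl) \<sigma>)}"

definition interp_lang :: "'p \<Rightarrow> ('c, 'p, 'v, 'd) program \<Rightarrow> 'c trm \<Rightarrow> (pos \<Rightarrow> (pos \<times> 'v, 'd) formula) \<Rightarrow> 'c trm set" where
  "interp_lang fls P t I = lang (interp_trans P t I) {(fls, [])}"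

end

theory Submission
  imports Defs
begin

text \<open>Let \<open>\<sigma>\<close> satisfy every constraint of a tree \<open>s\<close> accepted by the interpolant
automaton. Each transition of that automaton is a valid implication from the interpolants
of the body states, together with the clause constraint, to the interpolant of the head
state. Hence, bottom-up, \<open>\<sigma>\<close> satisfies the interpolant of the state reached at every node,
evaluated on the arguments of that node's atom. At the root this interpolant is \<open>false\<close>,
so no such \<open>\<sigma>\<close> exists and \<open>s\<close> is infeasible; forgetting the node component of the states
turns the run into a run of the trace automaton.\<close>

definition interp_holds ::
    "('c, 'p, 'v, 'd) program \<Rightarrow> 'c trm \<Rightarrow> (pos \<Rightarrow> (pos \<times> 'v, 'd) formula) \<Rightarrow>
     pos \<Rightarrow> 'd list \<Rightarrow> bool" where
  "interp_holds P t I j ds = fsem (I j)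
     (\<lambda>y. case map_of (zip (atom_args P t j) ds) y of Some d \<Rightarrow> d | None \<Rightarrow> undefined)"

lemma Pi_eq_interp_holds: "Pi P t I j X \<sigma> = interp_holds P t I j (map \<sigma> X)"
  unfolding Pi_def interp_holds_def by simp

lemma sub_append: "sub t (u @ v) = (case sub t u of None \<Rightarrow> None | Some t' \<Rightarrow> sub t' v)"
proof (induction u arbitrary: t)
  case (Cons i u)
  then show ?case by (cases t) auto
qed simp

lemma av_snoc: "av P t w Y (u @ [i]) =
   map (ren P t (w @ u) (av P t w Y u)) (snd (body (clause_at P t (w @ u)) ! i))"
  by (induction u arbitrary: w Y) auto

lemma atom_args_snoc: "atom_args P t (u @ [i]) =
   map (ren P t u (atom_args P t u)) (snd (body (clause_at P t u) ! i))"
  unfolding atom_args_def using av_snoc[of P t "[]" "[]" u i] by simp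

lemma map_ren_hargs:
  assumes "distinct (hargs (clause_at P t w))" and "length Y = length (hargs (clause_at P t w))"
  shows "map (ren P t w Y) (hargs (clause_at P t w)) = Y"
  by (rule nth_equalityI) (use assms in \<open>auto simp: ren_def map_of_zip_nth\<close>)

lemma reach_interp_trans_imp_reach_trace_trans:
  "reach (interp_trans P t I) s q \<Longrightarrow> reach (trace_trans P) s (fst q)"
proof (induction rule: reach.induct)
  case (1 c qs q ts)
  then obtain cl j js where c: "P c = Some cl" and qs: "qs = zip (map fst (body cl)) js"
    and q: "q = (head cl, j)" and len: "length js = length (body cl)"
    unfolding interp_trans_def by blast
  have "(c, map fst (body cl), head cl) \<in> trace_trans P"
    using c unfolding trace_trans_def by blast
  moreover have "list_all2 (reach (trace_trans P)) ts (map fst (body cl))"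
    using 1(2) qs len by (auto simp: list_all2_conv_all_nth)
  ultimately show ?case using q by (auto intro: reach.intros)
qed

text \<open>The arity hypothesis on the atom arguments of \<open>u\<close> is what makes the head
arguments of the clause used at \<open>u\<close> rename exactly onto them.\<close>

lemma reach_interp_trans_interp_holds:
  assumes arity: "\<forall>cl\<in>ran P. length (hargs cl) = ar (head cl) \<and>
                     (\<forall>(p, X)\<in>set (body cl). length X = ar p)"
    and distinct: "\<forall>cl\<in>ran P. distinct (hargs cl)"
    and sat: "\<forall>u\<in>nodes s. fsem (node_constr P s u) \<sigma>"
  shows "reach (interp_trans P t I) s' q \<Longrightarrow> sub s u = Some s' \<Longrightarrow>
    length (atom_args P s u) = ar (fst q) \<Longrightarrow>
    interp_holds P t I (snd q) (map \<sigma> (atom_args P s u))"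
proof (induction arbitrary: u rule: reach.induct)
  case (1 c qs q ts)
  from 1(1) obtain cl j js where c: "P c = Some cl" and qs: "qs = zip (map fst (body cl)) js"
    and q: "q = (head cl, j)" and len: "length js = length (body cl)"
    and impl: "\<forall>\<tau>. fsem (constr cl) \<tau> \<and> (\<forall>m < length js. Pi P t I (js ! m) (snd (body cl ! m)) \<tau>)
                  \<longrightarrow> Pi P t I j (hargs cl) \<tau>"
    unfolding interp_trans_def by blast
  define Y where "Y = atom_args P s u"
  define \<tau> where "\<tau> = \<sigma> \<circ> ren P s u Y"
  have cl: "clause_at P s u = cl" and cl_ran: "cl \<in> ran P"
    using 1(3) c by (auto simp: clause_at_def ranI)
  have "fsem (constr cl) \<tau>"
    using sat 1(3) cl unfolding node_constr_def rename_def \<tau>_def Y_def nodes_def by auto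
  moreover have "Pi P t I (js ! m) (snd (body cl ! m)) \<tau>" if m: "m < length js" for m
  proof -
    have lts: "length ts = length js" using 1(2) qs len by (simp add: list_all2_conv_all_nth)
    have sub_m: "sub s (u @ [m]) = Some (ts ! m)" using 1(3) m lts by (simp add: sub_append)
    have args_m: "atom_args P s (u @ [m]) = map (ren P s u Y) (snd (body cl ! m))"
      using atom_args_snoc[of P s u m] cl Y_def by simp
    have "length (snd (body cl ! m)) = ar (fst (body cl ! m))"
      using arity cl_ran nth_mem[of m "body cl"] m len by (cases "body cl ! m") fastforce
    then have "length (atom_args P s (u @ [m])) = ar (fst (qs ! m))"
      using args_m qs m len by simp
    moreover have "\<forall>v. sub s v = Some (ts ! m) \<longrightarrow> length (atom_args P s v) = ar (fst (qs ! m))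
        \<longrightarrow> interp_holds P t I (snd (qs ! m)) (map \<sigma> (atom_args P s v))"
      using 1(2) m lts by (simp add: list_all2_conv_all_nth)
    ultimately have "interp_holds P t I (js ! m) (map \<sigma> (atom_args P s (u @ [m])))"
      using sub_m qs m len by simp
    then show ?thesis using args_m by (simp add: Pi_eq_interp_holds \<tau>_def)
  qed
  ultimately have "Pi P t I j (hargs cl) \<tau>" using impl by blast
  moreover have "map (ren P s u Y) (hargs cl) = Y"
    using map_ren_hargs[of P s u Y] distinct arity cl cl_ran 1(4) q Y_def by simp
  ultimately show ?case
    using q by (metis Pi_eq_interp_holds \<tau>_def Y_def map_map snd_conv)
qed

theorem theorem1:
  fixes fls :: 'p
    and P :: "('c, 'p, 'v, 'd) program"
    and t :: "'c trm"
    and I :: "pos \<Rightarrow> (pos \<times> 'v, 'd) formula"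
  assumes "wf_program fls P"
    and "admits_interpolation TYPE(pos \<times> 'v) TYPE('d)"
    and "t \<in> trace_terms fls P"
    and "\<not> feasible P t"
    and "tree_interpolant P t I"
  shows "\<forall>s \<in> interp_lang fls P t I. s \<in> trace_terms fls P \<and> \<not> feasible P s"
proof
  fix s assume "s \<in> interp_lang fls P t I"
  then have run: "reach (interp_trans P t I) s (fls, [])"
    unfolding interp_lang_def lang_def by simp
  have "s \<in> trace_terms fls P"
    using reach_interp_trans_imp_reach_trace_trans[OF run] unfolding trace_terms_def lang_def by simp
  moreover have "\<not> feasible P s"
  proof
    assume "feasible P s"
    then obtain \<sigma> where "fsem (F_sub P s []) \<sigma>"
      unfolding feasible_def satisfiable_def by blast
    then have sat: "\<forall>u\<in>nodes s. fsem (node_constr P s u) \<sigma>"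
      unfolding F_sub_def conj_def by auto
    from \<open>wf_program fls P\<close> obtain ar where "ar fls = 0"
      and "\<forall>cl\<in>ran P. length (hargs cl) = ar (head cl) \<and> (\<forall>(p, X)\<in>set (body cl). length X = ar p)"
      and "\<forall>cl\<in>ran P. distinct (hargs cl)"
      unfolding wf_program_def by blast
    then have "interp_holds P t I [] []"
      using reach_interp_trans_interp_holds[OF _ _ sat run, of ar "[]"]
      by (simp add: atom_args_def)
    moreover have "I [] = ffalse" using \<open>tree_interpolant P t I\<close> unfolding tree_interpolant_def by simp
    ultimately show False unfolding interp_holds_def ffalse_def by simp
  qed
  ultimately show "s \<in> trace_terms fls P \<and> \<not> feasible P s" by blast
qed

end
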